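(* Every complex $3$-dimensional $(-1,1)$-superalgebra of type $(2,1)$ is associative.
   Context: All algebras are over $\mathbb{C}$. A superalgebra is a $\mathbb{Z}_2$-graded algebra $A=A_0\oplus A_1$ with $A_iA_j\subseteq A_{i+j \bmod 2}$; $|x|\in\{0,1\}$ is the degree of a homogeneous $x$. It has type $(n,m)$ if $\dim A_0=n$, $\dim A_1=m$. The associator is $(x,y,z)=(xy)z-x(yz)$; a superalgebra is associative if $(x,y,z)=0$ for all $x,y,z$. A superalgebra is right alternative if $(x,y,z)=-(-1)^{|y||z|}(x,z,y)$ for all homogeneous $x,y,z$. A $(-1,1)$-superalgebra is a right alternative superalgebra satisfying $(x,y,z)+(-1)^{|x||y|+|x||z|}(y,z,x)+(-1)^{|z||y|+|x||z|}(z,x,y)=0$ for all homogeneous $x,y,z$. *)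

theory Defs
  imports Main "HOL.Complex"
begin

text \<open>A complex superalgebra of type (2,1) is presented by a homogeneous basis
  e1, e2 (even) and f (odd), with elements the coordinate functions
  bidx => complex, and multiplication given by structure constants
  c i j k (the k-th coordinate of the product of basis vectors i and j).\<close>

datatype bidx = E1 | E2 | F1

fun bdeg :: "bidx \<Rightarrow> nat" where
  "bdeg E1 = 0" | "bdeg E2 = 0" | "bdeg F1 = 1"

type_synonym sv = "bidx \<Rightarrow> complex"
type_synonym sconst = "bidx \<Rightarrow> bidx \<Rightarrow> bidx \<Rightarrow> complex"

definition basis_set :: "bidx set" where
  "basis_set = {E1, E2, F1}"

definition smul :: "sconst \<Rightarrow> sv \<Rightarrow> sv \<Rightarrow> sv" where
  "smul c x y = (\<lambda>k. \<Sum>i\<in>basis_set. \<Sum>j\<in>basis_set. x i * y j * c i j k)"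

definition graded :: "sconst \<Rightarrow> bool" where
  "graded c \<longleftrightarrow> (\<forall>i j k. c i j k \<noteq> 0 \<longrightarrow> bdeg k = (bdeg i + bdeg j) mod 2)"

definition homog :: "sv \<Rightarrow> nat \<Rightarrow> bool" where
  "homog x d \<longleftrightarrow> d \<in> {0, 1} \<and> (\<forall>i. bdeg i \<noteq> d \<longrightarrow> x i = 0)"

definition sassoc :: "sconst \<Rightarrow> sv \<Rightarrow> sv \<Rightarrow> sv \<Rightarrow> sv" where
  "sassoc c x y z = (\<lambda>k. smul c (smul c x y) z k - smul c x (smul c y z) k)"

definition associative :: "sconst \<Rightarrow> bool" where
  "associative c \<longleftrightarrow> (\<forall>x y z. sassoc c x y z = (\<lambda>k. 0))"

definition right_alternative :: "sconst \<Rightarrow> bool" where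
  "right_alternative c \<longleftrightarrow>
    (\<forall>x y z dx dy dz. homog x dx \<and> homog y dy \<and> homog z dz \<longrightarrow>
       sassoc c x y z = (\<lambda>k. - ((-1::complex) ^ (dy * dz)) * sassoc c x z y k))"

definition minus_one_one :: "sconst \<Rightarrow> bool" where
  "minus_one_one c \<longleftrightarrow> right_alternative c \<and>
    (\<forall>x y z dx dy dz. homog x dx \<and> homog y dy \<and> homog z dz \<longrightarrow>
       (\<forall>k. sassoc c x y z k
            + (-1::complex) ^ (dx * dy + dx * dz) * sassoc c y z x k
            + (-1::complex) ^ (dz * dy + dx * dz) * sassoc c z x y k = 0))"

end

theory Submission
  imports Defs
begin

(* Write A = A0 + C f with A0 even and f odd. The even part A0 is a two-dimensional right
   alternative algebra, hence associative. By the grading, even elements act on f by scalars,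
   x f = \<lambda>(x) f and f x = \<rho>(x) f, and the superidentities make \<lambda>, \<rho> multiplicative and force
   w = f f to satisfy w x = \<lambda>(x) w and x w = (3 \<lambda>(x) - 2 \<rho>(x)) w. Associativity of A0 applied to
   (x x) w then gives 6 (\<lambda>(x) - \<rho>(x))^2 w = 0, and (\<lambda>(x) - \<rho>(x)) w = 0 makes every associator
   involving f vanish. *)

definition unit_vec :: "bidx \<Rightarrow> sv" where
  "unit_vec i = (\<lambda>k. if k = i then 1 else 0)"

definition basis_assoc :: "sconst \<Rightarrow> bidx \<Rightarrow> bidx \<Rightarrow> bidx \<Rightarrow> sv" where
  "basis_assoc c i j l = sassoc c (unit_vec i) (unit_vec j) (unit_vec l)"

lemma sum_basis_set: "(\<Sum>i\<in>basis_set. f i) = f E1 + f E2 + f F1"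
  by (simp add: basis_set_def add.assoc)

lemma bdeg_eq_0_iff: "bdeg i = 0 \<longleftrightarrow> i \<noteq> F1"
  by (cases i) simp_all

lemma homog_unit_vec: "homog (unit_vec i) (bdeg i)"
  by (cases i) (auto simp: homog_def unit_vec_def)

lemma smul_unit_vec: "smul c (unit_vec i) (unit_vec j) = c i j"
  by (cases i; cases j) (auto simp: smul_def sum_basis_set unit_vec_def)

lemma smul_unit_vec_right: "smul c x (unit_vec l) k = (\<Sum>i\<in>basis_set. x i * c i l k)"
  by (cases l) (simp_all add: smul_def sum_basis_set unit_vec_def)

lemma smul_unit_vec_left: "smul c (unit_vec i) y k = (\<Sum>j\<in>basis_set. y j * c i j k)"
  by (cases i) (simp_all add: smul_def sum_basis_set unit_vec_def)

lemma basis_assoc_eq: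
  "basis_assoc c i j l k = (\<Sum>m\<in>basis_set. c i j m * c m l k) - (\<Sum>m\<in>basis_set. c j l m * c i m k)"
  by (simp add: basis_assoc_def sassoc_def smul_unit_vec smul_unit_vec_right smul_unit_vec_left
      mult.commute)

lemma sassoc_trilinear:
  "sassoc c x y z k =
     (\<Sum>i\<in>basis_set. \<Sum>j\<in>basis_set. \<Sum>l\<in>basis_set. x i * y j * z l * basis_assoc c i j l k)"
  unfolding sassoc_def smul_def basis_assoc_eq sum_basis_set by algebra

lemma associativeI_basis_assoc:
  assumes "\<And>i j l k. basis_assoc c i j l k = 0"
  shows "associative c"
  unfolding associative_def by (intro allI ext) (simp add: sassoc_trilinear assms)

lemma graded_zero:
  "graded c \<Longrightarrow> bdeg k \<noteq> (bdeg i + bdeg j) mod 2 \<Longrightarrow> c i j k = 0"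
  unfolding graded_def by blast

lemmas basis_assoc_expand = basis_assoc_eq sum_basis_set

lemma basis_assoc_graded:
  assumes "graded c" "bdeg k \<noteq> (bdeg i + bdeg j + bdeg l) mod 2"
  shows "basis_assoc c i j l k = 0"
proof -
  have vanish: "c i j m * c m l k = 0" "c j l m * c i m k = 0" for m
    using assms unfolding graded_def
    by (metis mod_add_left_eq mult_eq_0_iff, metis mod_add_right_eq add.assoc mult_eq_0_iff)
  show ?thesis unfolding basis_assoc_eq vanish by simp
qed

lemma even_part_associative:
  assumes "graded c"
    and skew: "\<And>i j l k. bdeg i = 0 \<Longrightarrow> bdeg j = 0 \<Longrightarrow> bdeg l = 0 \<Longrightarrow>
      basis_assoc c i j l k = - basis_assoc c i l j k"
    and "bdeg i = 0" "bdeg j = 0" "bdeg l = 0"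
  shows "basis_assoc c i j l k = 0"
proof -
  have even_products: "c E1 E1 F1 = 0" "c E1 E2 F1 = 0" "c E2 E1 F1 = 0" "c E2 E2 F1 = 0"
    by (rule graded_zero[OF \<open>graded c\<close>]; simp)+
  have skew_even: "basis_assoc c i E1 E1 k = 0" "basis_assoc c i E2 E2 k = 0"
    "basis_assoc c i E2 E1 k = - basis_assoc c i E1 E2 k" if "bdeg i = 0" for i k
    using skew[OF that, of E1 E1 k] skew[OF that, of E2 E2 k] skew[OF that, of E2 E1 k]
    by (simp_all add: eq_neg_iff_add_eq_0 flip: mult_2)
  note rels = skew_even[of E1 E1, simplified] skew_even[of E1 E2, simplified]
    skew_even[of E2 E1, simplified] skew_even[of E2 E2, simplified]
  have mixed_vanish: "basis_assoc c E1 E1 E2 E1 = 0" "basis_assoc c E1 E1 E2 E2 = 0"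
    "basis_assoc c E2 E1 E2 E1 = 0" "basis_assoc c E2 E1 E2 E2 = 0"
    using rels even_products unfolding basis_assoc_expand by algebra+
  show ?thesis
  proof (cases "bdeg k = 0")
    case True
    with assms(3-5) show ?thesis
      using skew_even[of i k] mixed_vanish by (cases i; cases j; cases l; cases k) simp_all
  next
    case False
    with assms(3-5) have "bdeg k \<noteq> (bdeg i + bdeg j + bdeg l) mod 2" by simp
    then show ?thesis by (rule basis_assoc_graded[OF \<open>graded c\<close>])
  qed
qed

(* The odd part is one-dimensional, so the left and right actions of A0 on it commute. *)
lemma basis_assoc_even_odd_even:
  assumes "graded c" "bdeg x = 0" "bdeg y = 0"
  shows "basis_assoc c x F1 y k = 0"
  using assms graded_zero[OF \<open>graded c\<close>]
  by (cases k) (simp_all add: basis_assoc_expand)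

locale minus_one_one_basis =
  fixes c :: sconst
  assumes graded: "graded c"
    and right_alt: "\<And>i j l k. basis_assoc c i j l k =
      - ((-1) ^ (bdeg j * bdeg l)) * basis_assoc c i l j k"
    and cyclic: "\<And>i j l k. basis_assoc c i j l k
      + (-1) ^ (bdeg i * bdeg j + bdeg i * bdeg l) * basis_assoc c j l i k
      + (-1) ^ (bdeg l * bdeg j + bdeg i * bdeg l) * basis_assoc c l i j k = 0"

lemma minus_one_one_basisI:
  assumes "graded c" "minus_one_one c"
  shows "minus_one_one_basis c"
proof
  have "right_alternative c" using assms(2) by (simp add: minus_one_one_def)
  then show "basis_assoc c i j l k = - ((-1) ^ (bdeg j * bdeg l)) * basis_assoc c i l j k" for i j l k
    unfolding right_alternative_def basis_assoc_def by (metis homog_unit_vec)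
  show "basis_assoc c i j l k
      + (-1) ^ (bdeg i * bdeg j + bdeg i * bdeg l) * basis_assoc c j l i k
      + (-1) ^ (bdeg l * bdeg j + bdeg i * bdeg l) * basis_assoc c l i j k = 0" for i j l k
    using assms(2) homog_unit_vec unfolding minus_one_one_def basis_assoc_def by blast
qed (fact assms(1))

context minus_one_one_basis
begin

lemmas graded_const_zero [simp] = graded_zero[OF graded]

lemma basis_assoc_even:
  assumes "bdeg i = 0" "bdeg j = 0" "bdeg l = 0"
  shows "basis_assoc c i j l k = 0"
proof (rule even_part_associative[OF graded _ assms])
  show "basis_assoc c i' j' l' k' = - basis_assoc c i' l' j' k'" if "bdeg j' = 0" for i' j' l' k'
    using right_alt[of i' j' l' k'] that by simp
qed

lemma basis_assoc_even_even_odd: "bdeg x = 0 \<Longrightarrow> bdeg y = 0 \<Longrightarrow> basis_assoc c x y F1 k = 0"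
  using right_alt[of x y F1 k] basis_assoc_even_odd_even[OF graded, of x y k] by simp

lemma basis_assoc_odd_even_even: "bdeg x = 0 \<Longrightarrow> bdeg y = 0 \<Longrightarrow> basis_assoc c F1 x y k = 0"
  using cyclic[of x y F1 k] basis_assoc_even_even_odd basis_assoc_even_odd_even[OF graded, of y x k] by simp

lemma basis_assoc_odd_odd_odd: "basis_assoc c F1 F1 F1 k = 0"
  using cyclic[of F1 F1 F1 k] by simp

(* For even x write \<lambda> x = c x F1 F1 and \<rho> x = c F1 x F1, so that x f = \<lambda> x f and f x = \<rho> x f;
   the odd square w = f f has coordinates c F1 F1 k. *)
lemma odd_square_mult_right:
  "bdeg x = 0 \<Longrightarrow> (\<Sum>m\<in>basis_set. c F1 F1 m * c m x k) = c x F1 F1 * c F1 F1 k"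
  using right_alt[of F1 x F1 k] by (simp add: basis_assoc_expand algebra_simps)

lemma odd_square_mult_left:
  assumes "bdeg x = 0"
  shows "(\<Sum>m\<in>basis_set. c x m k * c F1 F1 m) = (3 * c x F1 F1 - 2 * c F1 x F1) * c F1 F1 k"
  using cyclic[of x F1 F1 k] odd_square_mult_right[OF assms, of k]
  by (simp add: basis_assoc_expand assms) algebra

lemma left_scalar_multiplicative:
  "bdeg x = 0 \<Longrightarrow> bdeg y = 0 \<Longrightarrow>
    (\<Sum>m\<in>basis_set. c x y m * c m F1 F1) = c x F1 F1 * c y F1 F1"
  using basis_assoc_even_even_odd[of x y F1] by (simp add: basis_assoc_expand algebra_simps)

lemma right_scalar_multiplicative:
  "bdeg x = 0 \<Longrightarrow> bdeg y = 0 \<Longrightarrow>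
    (\<Sum>m\<in>basis_set. c x y m * c F1 m F1) = c F1 x F1 * c F1 y F1"
  using basis_assoc_odd_even_even[of x y F1] by (simp add: basis_assoc_expand algebra_simps)

lemma scalar_diff_mult_odd_square_eq_0:
  assumes x: "bdeg x = 0"
  shows "(c x F1 F1 - c F1 x F1) * c F1 F1 k = 0"
proof -
  let ?l = "c x F1 F1" and ?r = "c F1 x F1" and ?w = "c F1 F1 k"
  \<comment> \<open>the associator (x, x, w) vanishes in the associative even part\<close>
  have "0 = (\<Sum>m\<in>basis_set. c F1 F1 m * basis_assoc c x x m k)"
    using basis_assoc_even[OF x x] by (simp add: sum_basis_set)
  also have "\<dots> = (\<Sum>n\<in>basis_set. c x x n * (\<Sum>m\<in>basis_set. c n m k * c F1 F1 m))
      - (\<Sum>n\<in>basis_set. c x n k * (\<Sum>m\<in>basis_set. c x m n * c F1 F1 m))"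
    unfolding basis_assoc_eq sum_basis_set by algebra
  also have "\<dots> = (3 * (\<Sum>n\<in>basis_set. c x x n * c n F1 F1)
      - 2 * (\<Sum>n\<in>basis_set. c x x n * c F1 n F1)) * ?w - (3 * ?l - 2 * ?r)^2 * ?w"
    using odd_square_mult_left[of E1 k] odd_square_mult_left[of E2 k]
      odd_square_mult_left[OF x, of E1] odd_square_mult_left[OF x, of E2]
      odd_square_mult_left[OF x, of k]
    by (simp add: sum_basis_set x) algebra
  also have "\<dots> = (3 * ?l^2 - 2 * ?r^2) * ?w - (3 * ?l - 2 * ?r)^2 * ?w"
    using left_scalar_multiplicative[OF x x] right_scalar_multiplicative[OF x x] by (simp add: power2_eq_square)
  also have "\<dots> = - 6 * ((?l - ?r)^2 * ?w)"
    by algebra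
  finally show ?thesis by (simp add: power2_eq_square)
qed

lemma basis_assoc_even_odd_odd:
  assumes x: "bdeg x = 0"
  shows "basis_assoc c x F1 F1 k = 0"
proof -
  have "basis_assoc c x F1 F1 k = c x F1 F1 * c F1 F1 k - (\<Sum>m\<in>basis_set. c x m k * c F1 F1 m)"
    by (simp add: basis_assoc_expand x mult.commute)
  also have "\<dots> = - 2 * ((c x F1 F1 - c F1 x F1) * c F1 F1 k)"
    unfolding odd_square_mult_left[OF x] by (simp add: algebra_simps)
  finally show ?thesis by (simp add: scalar_diff_mult_odd_square_eq_0[OF x])
qed

lemma basis_assoc_odd_even_odd:
  assumes x: "bdeg x = 0"
  shows "basis_assoc c F1 x F1 k = 0"
proof -
  have "basis_assoc c F1 x F1 k = - ((c x F1 F1 - c F1 x F1) * c F1 F1 k)"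
    by (simp add: basis_assoc_expand x algebra_simps)
  then show ?thesis by (simp add: scalar_diff_mult_odd_square_eq_0[OF x])
qed

lemma basis_assoc_odd_odd_even:
  assumes x: "bdeg x = 0"
  shows "basis_assoc c F1 F1 x k = 0"
proof -
  have "basis_assoc c F1 F1 x k = (\<Sum>m\<in>basis_set. c F1 F1 m * c m x k) - c F1 x F1 * c F1 F1 k"
    by (simp add: basis_assoc_expand x mult.commute)
  also have "\<dots> = (c x F1 F1 - c F1 x F1) * c F1 F1 k"
    unfolding odd_square_mult_right[OF x] by (simp add: algebra_simps)
  finally show ?thesis by (simp add: scalar_diff_mult_odd_square_eq_0[OF x])
qed

lemma basis_assoc_zero: "basis_assoc c i j l k = 0"
  by (cases "i = F1"; cases "j = F1"; cases "l = F1")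
    (simp_all add: bdeg_eq_0_iff basis_assoc_even basis_assoc_even_even_odd basis_assoc_odd_even_even
      basis_assoc_even_odd_even[OF graded] basis_assoc_even_odd_odd basis_assoc_odd_even_odd basis_assoc_odd_odd_even
      basis_assoc_odd_odd_odd)

theorem associative: "associative c"
  using basis_assoc_zero by (rule associativeI_basis_assoc)

end

theorem mainTheorem18:
  fixes c :: sconst
  assumes "graded c"
    and "minus_one_one c"
  shows "associative c"
  using assms by (rule minus_one_one_basis.associative[OF minus_one_one_basisI])

end
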